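(* With the notation of the context, let $\hat u=\frac{\ell}{\ell-1}u$, and let $(\bar x,\bar y)$ be an integral solution of the capacitated facility location instance with client set $C_r$ and capacity $\hat u$ that serves every client of $C_r$, violates capacities by a factor at most $\beta$ (each open facility $i$ has $\sum_{j\in C_r}\bar x_{ij}\le\beta\hat u$), and has cost $\sum_{j\in C_r}\sum_i c(i,j)\bar x_{ij}+\sum_i f_i\bar y_i\le \alpha\big(\sum_{j\in C_r}\sum_i c(i,j)\hat x_{ij}+\sum_i f_i\hat y_i\big)$. Then $(\bar x,\bar y,\hat z)$ is an integral solution of the CFLPP instance (clients in $C_p$ pay penalty, clients in $C_r$ are served) whose cost is at most $\max\{\alpha(1+\frac{1}{\ell-1}),\ \ell\}\cdot\mathrm{OPT}_{LP}$ and in which each open facility serves at most $\beta(1+\frac{1}{\ell-1})u$ clients, for every $\ell\ge 2$.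
   Context: Instance of CFLPP: clients $C$, facilities $F$, opening costs $f_i\ge0$, metric service costs $c(i,j)\ge0$, penalties $p_j\ge0$, uniform capacity $u$. $\mathrm{LP}_{CFLPP}$: minimize $\sum_{j}\sum_{i}c(i,j)x_{ij}+\sum_if_iy_i+\sum_jp_jz_j$ subject to $\sum_ix_{ij}+z_j\ge1$ ($j\in C$), $\sum_jx_{ij}\le u y_i$ ($i\in F$), $x_{ij}\le y_i$, and $x,y,z\in[0,1]$. Let $\rho^*=(x^*,y^*,z^* )$ be an optimal solution with value $\mathrm{OPT}_{LP}$ and $\sum_ix^*_{ij}\le1$ for all $j$. Fix $\ell\ge2$, $C_p=\{j: z^*_j\ge1/\ell\}$, $C_r=C\setminus C_p$. Define $\hat z_j=1$, $\hat x_{ij}=0$ for $j\in C_p$; $\hat z_j=0$, $\hat x_{ij}=x^*_{ij}/\sum_{i'}x^*_{i'j}$ for $j\in C_r$; and $\hat y_i=\min\{1, y^*_i\max_{j\in C_r:x^*_{ij}>0}\hat x_{ij}/x^*_{ij}\}$ (or $y^*_i$ if the max is over an empty set). Then $(\hat x|_{C_r},\hat y)$ is feasible for the natural LP of capacitated facility location on clients $C_r$ with capacity $\frac{\ell}{\ell-1}u$. *)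

theory Defs
  imports Main "HOL.Real"
begin

definition lp_feasible ::
  "'c set \<Rightarrow> 'f set \<Rightarrow> real \<Rightarrow> ('f \<Rightarrow> 'c \<Rightarrow> real) \<Rightarrow> ('f \<Rightarrow> real) \<Rightarrow> ('c \<Rightarrow> real) \<Rightarrow> bool" where
  "lp_feasible C F u x y z \<longleftrightarrow>
     (\<forall>j\<in>C. (\<Sum>i\<in>F. x i j) + z j \<ge> 1) \<and>
     (\<forall>i\<in>F. (\<Sum>j\<in>C. x i j) \<le> u * y i) \<and>
     (\<forall>i\<in>F. \<forall>j\<in>C. x i j \<le> y i) \<and>
     (\<forall>i\<in>F. \<forall>j\<in>C. 0 \<le> x i j \<and> x i j \<le> 1) \<and>
     (\<forall>i\<in>F. 0 \<le> y i \<and> y i \<le> 1) \<and>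
     (\<forall>j\<in>C. 0 \<le> z j \<and> z j \<le> 1)"

definition cflpp_cost ::
  "'c set \<Rightarrow> 'f set \<Rightarrow> ('f \<Rightarrow> 'c \<Rightarrow> real) \<Rightarrow> ('f \<Rightarrow> real) \<Rightarrow> ('c \<Rightarrow> real)
   \<Rightarrow> ('f \<Rightarrow> 'c \<Rightarrow> real) \<Rightarrow> ('f \<Rightarrow> real) \<Rightarrow> ('c \<Rightarrow> real) \<Rightarrow> real" where
  "cflpp_cost C F c f p x y z =
     (\<Sum>j\<in>C. \<Sum>i\<in>F. c i j * x i j) + (\<Sum>i\<in>F. f i * y i) + (\<Sum>j\<in>C. p j * z j)"

definition cfl_cost ::
  "'c set \<Rightarrow> 'f set \<Rightarrow> ('f \<Rightarrow> 'c \<Rightarrow> real) \<Rightarrow> ('f \<Rightarrow> real)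
   \<Rightarrow> ('f \<Rightarrow> 'c \<Rightarrow> real) \<Rightarrow> ('f \<Rightarrow> real) \<Rightarrow> real" where
  "cfl_cost C F c f x y = (\<Sum>j\<in>C. \<Sum>i\<in>F. c i j * x i j) + (\<Sum>i\<in>F. f i * y i)"

definition Cp :: "'c set \<Rightarrow> ('c \<Rightarrow> real) \<Rightarrow> real \<Rightarrow> 'c set" where
  "Cp C zs l = {j\<in>C. zs j \<ge> 1 / l}"

definition Cr :: "'c set \<Rightarrow> ('c \<Rightarrow> real) \<Rightarrow> real \<Rightarrow> 'c set" where
  "Cr C zs l = C - Cp C zs l"

definition z_hat :: "'c set \<Rightarrow> ('c \<Rightarrow> real) \<Rightarrow> real \<Rightarrow> 'c \<Rightarrow> real" where
  "z_hat C zs l j = (if j \<in> Cp C zs l then 1 else 0)"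

definition x_hat :: "'c set \<Rightarrow> 'f set \<Rightarrow> ('f \<Rightarrow> 'c \<Rightarrow> real) \<Rightarrow> ('c \<Rightarrow> real) \<Rightarrow> real
                     \<Rightarrow> 'f \<Rightarrow> 'c \<Rightarrow> real" where
  "x_hat C F xs zs l i j =
     (if j \<in> Cr C zs l then xs i j / (\<Sum>i'\<in>F. xs i' j) else 0)"

definition y_hat :: "'c set \<Rightarrow> 'f set \<Rightarrow> ('f \<Rightarrow> 'c \<Rightarrow> real) \<Rightarrow> ('f \<Rightarrow> real) \<Rightarrow> ('c \<Rightarrow> real)
                     \<Rightarrow> real \<Rightarrow> 'f \<Rightarrow> real" where
  "y_hat C F xs ys zs l i =
     (let S = {j\<in>Cr C zs l. xs i j > 0} in
      if S = {} then ys i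
      else min 1 (ys i * Max ((\<lambda>j. x_hat C F xs zs l i j / xs i j) ` S)))"

end

theory Submission
  imports Defs
begin

text \<open>A client of \<open>C\<^sub>r\<close> is fractionally served to an extent greater than \<open>(\<ell> - 1)/\<ell>\<close>, so
  rescaling its assignment to a full one inflates it by at most \<open>\<ell>/(\<ell> - 1)\<close>; the same factor
  bounds the rescaled opening variables. Hence the rounded solution on \<open>C\<^sub>r\<close> costs at most
  \<open>\<alpha> \<ell>/(\<ell> - 1)\<close> times the LP's connection and opening cost, while each client of \<open>C\<^sub>p\<close> pays
  its full penalty, at most \<open>\<ell>\<close> times the fractional penalty \<open>p\<^sub>j z\<^sup>*\<^sub>j \<ge> p\<^sub>j/\<ell>\<close> it pays in the LP.\<close>

lemma Cr_eq: "Cr C zs l = {j\<in>C. zs j < 1 / l}"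
  unfolding Cr_def Cp_def by auto

lemma Cp_eq: "Cp C zs l = {j\<in>C. \<not> zs j < 1 / l}"
  unfolding Cp_def by auto

lemma served_fraction_gt:
  assumes "lp_feasible C F u xs ys zs" and "0 < l" and "j \<in> Cr C zs l"
  shows "(l - 1) / l < (\<Sum>i\<in>F. xs i j)"
proof -
  from assms(3) have "j \<in> C" and "zs j < 1 / l" by (auto simp: Cr_eq)
  with assms(1) have "1 - zs j \<le> (\<Sum>i\<in>F. xs i j)" unfolding lp_feasible_def by force
  moreover have "(l - 1) / l = 1 - 1 / l" using \<open>0 < l\<close> by (simp add: field_simps)
  ultimately show ?thesis using \<open>zs j < 1 / l\<close> by linarith
qed

lemma x_hat_bounds:
  assumes feas: "lp_feasible C F u xs ys zs" and "1 < l" and "i \<in> F" and "j \<in> C"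
  shows "0 \<le> x_hat C F xs zs l i j \<and> x_hat C F xs zs l i j \<le> l / (l - 1) * xs i j"
proof -
  have xs_nonneg: "0 \<le> xs i j" using feas assms(3,4) unfolding lp_feasible_def by blast
  show ?thesis
  proof (cases "j \<in> Cr C zs l")
    case True
    define s where "s = (\<Sum>i\<in>F. xs i j)"
    have "(l - 1) / l < s" unfolding s_def using served_fraction_gt[OF feas _ True] \<open>1 < l\<close> by simp
    moreover have "0 < (l - 1) / l" using \<open>1 < l\<close> by simp
    ultimately have "0 < s" by linarith
    have "l - 1 < l * s" using \<open>(l - 1) / l < s\<close> \<open>1 < l\<close> by (simp add: field_simps)
    then have "1 / s \<le> l / (l - 1)" using \<open>0 < s\<close> \<open>1 < l\<close> by (simp add: field_simps)
    then have "xs i j * (1 / s) \<le> xs i j * (l / (l - 1))" using xs_nonneg by (rule mult_left_mono)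
    moreover have "x_hat C F xs zs l i j = xs i j * (1 / s)"
      using True unfolding x_hat_def s_def by simp
    ultimately show ?thesis using xs_nonneg \<open>0 < s\<close> by (simp add: mult.commute)
  next
    case False
    then show ?thesis using xs_nonneg \<open>1 < l\<close> unfolding x_hat_def by simp
  qed
qed

lemma y_hat_bounds:
  assumes "finite C" and feas: "lp_feasible C F u xs ys zs" and "1 < l" and i: "i \<in> F"
  shows "0 \<le> y_hat C F xs ys zs l i \<and> y_hat C F xs ys zs l i \<le> l / (l - 1) * ys i"
proof -
  define S where "S = {j\<in>Cr C zs l. xs i j > 0}"
  define g where "g = (\<lambda>j. x_hat C F xs zs l i j / xs i j)"
  have ys_nonneg: "0 \<le> ys i" using feas i unfolding lp_feasible_def by blast
  have L_ge_1: "1 \<le> l / (l - 1)" using \<open>1 < l\<close> by simp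
  show ?thesis
  proof (cases "S = {}")
    case True
    then show ?thesis
      using ys_nonneg mult_right_mono[OF L_ge_1 ys_nonneg] unfolding y_hat_def S_def by simp
  next
    case False
    have "finite S" using \<open>finite C\<close> unfolding S_def Cr_eq by simp
    have g_bounds: "0 \<le> g j \<and> g j \<le> l / (l - 1)" if "j \<in> S" for j
    proof -
      have "j \<in> C" and "0 < xs i j" using that unfolding S_def Cr_eq by auto
      then show ?thesis
        using x_hat_bounds[OF feas \<open>1 < l\<close> i] unfolding g_def by (auto simp: pos_divide_le_eq)
    qed
    have "Max (g ` S) \<in> g ` S" using \<open>finite S\<close> False by simp
    then obtain j where "j \<in> S" and "Max (g ` S) = g j" by blast
    then have "0 \<le> Max (g ` S)" and "Max (g ` S) \<le> l / (l - 1)" using g_bounds by auto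
    then have "0 \<le> ys i * Max (g ` S)" and "ys i * Max (g ` S) \<le> l / (l - 1) * ys i"
      using ys_nonneg mult_left_mono[of "Max (g ` S)" "l / (l - 1)" "ys i"] by (simp_all add: mult.commute)
    moreover have "y_hat C F xs ys zs l i = min 1 (ys i * Max (g ` S))"
      using False unfolding y_hat_def Let_def S_def[symmetric] g_def[symmetric] by simp
    ultimately show ?thesis by linarith
  qed
qed

lemma cfl_cost_nonneg:
  assumes "\<forall>i\<in>F. \<forall>j\<in>D. 0 \<le> c i j \<and> 0 \<le> x i j" and "\<forall>i\<in>F. 0 \<le> f i \<and> 0 \<le> y i"
  shows "0 \<le> cfl_cost D F c f x y"
  unfolding cfl_cost_def using assms by (auto intro!: add_nonneg_nonneg sum_nonneg)

lemma cfl_cost_le_scaled: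
  assumes "\<forall>i\<in>F. \<forall>j\<in>D. 0 \<le> c i j \<and> x' i j \<le> L * x i j"
    and "\<forall>i\<in>F. 0 \<le> f i \<and> y' i \<le> L * y i"
  shows "cfl_cost D F c f x' y' \<le> L * cfl_cost D F c f x y"
  unfolding cfl_cost_def distrib_left sum_distrib_left
proof (intro add_mono sum_mono)
  fix i j assume "j \<in> D" "i \<in> F"
  then show "c i j * x' i j \<le> L * (c i j * x i j)"
    using assms(1) mult_left_mono[of "x' i j" "L * x i j" "c i j"] by (simp add: algebra_simps)
next
  fix i assume "i \<in> F"
  then show "f i * y' i \<le> L * (f i * y i)"
    using assms(2) mult_left_mono[of "y' i" "L * y i" "f i"] by (simp add: algebra_simps)
qed

lemma cfl_cost_mono_clients:
  assumes "finite C" and "D \<subseteq> C" and "\<forall>i\<in>F. \<forall>j\<in>C. 0 \<le> c i j \<and> 0 \<le> x i j"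
  shows "cfl_cost D F c f x y \<le> cfl_cost C F c f x y"
  unfolding cfl_cost_def using assms by (auto intro!: sum_mono2 sum_nonneg)

lemma penalty_Cp_le:
  assumes "finite C" and "0 < l" and "\<forall>j\<in>C. 0 \<le> p j \<and> 0 \<le> zs j"
  shows "(\<Sum>j\<in>Cp C zs l. p j) \<le> l * (\<Sum>j\<in>C. p j * zs j)"
proof -
  have "(\<Sum>j\<in>Cp C zs l. p j) \<le> (\<Sum>j\<in>Cp C zs l. l * (p j * zs j))"
  proof (rule sum_mono)
    fix j assume "j \<in> Cp C zs l"
    then have "j \<in> C" and "1 \<le> l * zs j" using \<open>0 < l\<close> unfolding Cp_def by (auto simp: field_simps)
    then show "p j \<le> l * (p j * zs j)"
      using assms(3) mult_left_mono[of 1 "l * zs j" "p j"] by (simp add: algebra_simps)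
  qed
  also have "\<dots> \<le> l * (\<Sum>j\<in>C. p j * zs j)"
    unfolding sum_distrib_left[symmetric] using assms
    by (intro mult_left_mono sum_mono2) (auto simp: Cp_def)
  finally show ?thesis .
qed

lemma cflpp_cost_extension:
  assumes "finite C"
  shows "cflpp_cost C F c f p (\<lambda>i j. if j \<in> Cr C zs l then xb i j else 0) yb (z_hat C zs l)
           = cfl_cost (Cr C zs l) F c f xb yb + (\<Sum>j\<in>Cp C zs l. p j)"
proof -
  have "(\<Sum>j\<in>C. \<Sum>i\<in>F. c i j * (if j \<in> Cr C zs l then xb i j else 0))
          = (\<Sum>j\<in>C. if zs j < 1 / l then \<Sum>i\<in>F. c i j * xb i j else 0)"
    by (rule sum.cong) (auto simp: Cr_eq)
  also have "\<dots> = (\<Sum>j\<in>Cr C zs l. \<Sum>i\<in>F. c i j * xb i j)"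
    using assms unfolding Cr_eq by (simp add: sum.inter_filter)
  finally have "(\<Sum>j\<in>C. \<Sum>i\<in>F. c i j * (if j \<in> Cr C zs l then xb i j else 0))
          = (\<Sum>j\<in>Cr C zs l. \<Sum>i\<in>F. c i j * xb i j)" .
  moreover have "(\<Sum>j\<in>C. p j * z_hat C zs l j) = (\<Sum>j\<in>C. if \<not> zs j < 1 / l then p j else 0)"
    by (rule sum.cong) (auto simp: z_hat_def Cp_eq)
  then have "(\<Sum>j\<in>C. p j * z_hat C zs l j) = (\<Sum>j\<in>Cp C zs l. p j)"
    using assms unfolding Cp_eq by (simp add: sum.inter_filter)
  ultimately show ?thesis unfolding cflpp_cost_def cfl_cost_def by simp
qed

lemma cfl_cost_hat_le:
  assumes finC: "finite C" and feas: "lp_feasible C F u xs ys zs" and "1 < l"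
    and c_nonneg: "\<forall>i\<in>F. \<forall>j\<in>C. 0 \<le> c i j" and f_nonneg: "\<forall>i\<in>F. 0 \<le> f i"
  shows "0 \<le> cfl_cost (Cr C zs l) F c f (x_hat C F xs zs l) (y_hat C F xs ys zs l)"
    and "cfl_cost (Cr C zs l) F c f (x_hat C F xs zs l) (y_hat C F xs ys zs l)
           \<le> l / (l - 1) * cfl_cost C F c f xs ys"
proof -
  have Cr_sub: "Cr C zs l \<subseteq> C" by (auto simp: Cr_eq)
  have xs_nonneg: "\<forall>i\<in>F. \<forall>j\<in>C. 0 \<le> c i j \<and> 0 \<le> xs i j"
    using feas c_nonneg unfolding lp_feasible_def by auto
  have hat_bounds:
    "\<forall>i\<in>F. \<forall>j\<in>Cr C zs l. 0 \<le> x_hat C F xs zs l i j \<and> x_hat C F xs zs l i j \<le> l / (l - 1) * xs i j"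
    "\<forall>i\<in>F. 0 \<le> y_hat C F xs ys zs l i \<and> y_hat C F xs ys zs l i \<le> l / (l - 1) * ys i"
    using x_hat_bounds[OF feas \<open>1 < l\<close>] y_hat_bounds[OF finC feas \<open>1 < l\<close>] Cr_sub by auto
  show "0 \<le> cfl_cost (Cr C zs l) F c f (x_hat C F xs zs l) (y_hat C F xs ys zs l)"
    using hat_bounds c_nonneg f_nonneg Cr_sub by (auto intro!: cfl_cost_nonneg)
  have "cfl_cost (Cr C zs l) F c f (x_hat C F xs zs l) (y_hat C F xs ys zs l)
          \<le> l / (l - 1) * cfl_cost (Cr C zs l) F c f xs ys"
    by (rule cfl_cost_le_scaled) (use hat_bounds c_nonneg f_nonneg Cr_sub in auto)
  also have "\<dots> \<le> l / (l - 1) * cfl_cost C F c f xs ys"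
    using cfl_cost_mono_clients[OF finC Cr_sub xs_nonneg] \<open>1 < l\<close> by (intro mult_left_mono) auto
  finally show "cfl_cost (Cr C zs l) F c f (x_hat C F xs zs l) (y_hat C F xs ys zs l)
                  \<le> l / (l - 1) * cfl_cost C F c f xs ys" .
qed

lemma le_max_mult_of_le_mult:
  fixes X \<alpha> H L K m :: real
  assumes "X \<le> \<alpha> * H" and "0 \<le> H" and "H \<le> L * K" and "0 \<le> K" and "0 \<le> m"
  shows "X \<le> max (\<alpha> * L) m * K"
proof (cases "0 \<le> \<alpha>")
  case True
  have "\<alpha> * H \<le> \<alpha> * L * K" using mult_left_mono[OF assms(3) True] by (simp add: mult.assoc)
  also have "\<dots> \<le> max (\<alpha> * L) m * K" using \<open>0 \<le> K\<close> by (intro mult_right_mono) auto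
  finally show ?thesis using assms(1) by linarith
next
  case False
  then have "\<alpha> * H \<le> 0" using \<open>0 \<le> H\<close> by (simp add: mult_nonpos_nonneg)
  moreover have "0 \<le> max (\<alpha> * L) m * K" using \<open>0 \<le> K\<close> \<open>0 \<le> m\<close> by simp
  ultimately show ?thesis using assms(1) by linarith
qed

theorem lemma1:
  fixes C :: "'c set" and F :: "'f set"
    and c :: "'f \<Rightarrow> 'c \<Rightarrow> real" and f :: "'f \<Rightarrow> real" and p :: "'c \<Rightarrow> real"
    and u l \<alpha> \<beta> :: real
    and xs :: "'f \<Rightarrow> 'c \<Rightarrow> real" and ys :: "'f \<Rightarrow> real" and zs :: "'c \<Rightarrow> real"
    and xb :: "'f \<Rightarrow> 'c \<Rightarrow> real" and yb :: "'f \<Rightarrow> real"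
  assumes finC: "finite C" and finF: "finite F"
    and f_nonneg: "\<forall>i\<in>F. 0 \<le> f i"
    and c_nonneg: "\<forall>i\<in>F. \<forall>j\<in>C. 0 \<le> c i j"
    and c_metric: "\<forall>i\<in>F. \<forall>i'\<in>F. \<forall>j\<in>C. \<forall>j'\<in>C. c i j \<le> c i j' + c i' j' + c i' j"
    and p_nonneg: "\<forall>j\<in>C. 0 \<le> p j"
    and u_nonneg: "0 \<le> u"
    and opt_feas: "lp_feasible C F u xs ys zs"
    and opt_min: "\<forall>x y z. lp_feasible C F u x y z \<longrightarrow>
                    cflpp_cost C F c f p xs ys zs \<le> cflpp_cost C F c f p x y z"
    and opt_sum: "\<forall>j\<in>C. (\<Sum>i\<in>F. xs i j) \<le> 1"
    and l_ge: "l \<ge> 2"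
    and xb_int: "\<forall>i\<in>F. \<forall>j\<in>Cr C zs l. xb i j \<in> {0, 1}"
    and yb_int: "\<forall>i\<in>F. yb i \<in> {0, 1}"
    and xb_le_yb: "\<forall>i\<in>F. \<forall>j\<in>Cr C zs l. xb i j \<le> yb i"
    and xb_serves: "\<forall>j\<in>Cr C zs l. (\<Sum>i\<in>F. xb i j) \<ge> 1"
    and xb_cap: "\<forall>i\<in>F. yb i = 1 \<longrightarrow> (\<Sum>j\<in>Cr C zs l. xb i j) \<le> \<beta> * (l / (l - 1) * u)"
    and xb_cost: "cfl_cost (Cr C zs l) F c f xb yb
                    \<le> \<alpha> * cfl_cost (Cr C zs l) F c f (x_hat C F xs zs l) (y_hat C F xs ys zs l)"
  shows "(let x = (\<lambda>i j. if j \<in> Cr C zs l then xb i j else 0); z = z_hat C zs l in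
          (\<forall>i\<in>F. \<forall>j\<in>C. x i j \<in> {0, 1}) \<and>
          (\<forall>i\<in>F. yb i \<in> {0, 1}) \<and>
          (\<forall>j\<in>C. z j \<in> {0, 1}) \<and>
          (\<forall>j\<in>Cp C zs l. z j = 1 \<and> (\<forall>i\<in>F. x i j = 0)) \<and>
          (\<forall>j\<in>Cr C zs l. z j = 0 \<and> (\<Sum>i\<in>F. x i j) \<ge> 1) \<and>
          (\<forall>j\<in>C. (\<Sum>i\<in>F. x i j) + z j \<ge> 1) \<and>
          (\<forall>i\<in>F. \<forall>j\<in>C. x i j \<le> yb i) \<and>
          cflpp_cost C F c f p x yb z
            \<le> max (\<alpha> * (1 + 1 / (l - 1))) l * cflpp_cost C F c f p xs ys zs \<and>
          (\<forall>i\<in>F. yb i = 1 \<longrightarrow> (\<Sum>j\<in>C. x i j) \<le> \<beta> * (1 + 1 / (l - 1)) * u))"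
proof -
  let ?Cr = "Cr C zs l" and ?Cp = "Cp C zs l"
  let ?x = "\<lambda>i j. if j \<in> ?Cr then xb i j else 0"
  define M where "M = max (\<alpha> * (1 + 1 / (l - 1))) l"
  have "1 < l" and "l \<le> M" using l_ge unfolding M_def by auto
  have L_eq: "l / (l - 1) = 1 + 1 / (l - 1)" using l_ge by (simp add: field_simps)
  have zs_nonneg: "\<forall>j\<in>C. 0 \<le> p j \<and> 0 \<le> zs j"
    using opt_feas p_nonneg unfolding lp_feasible_def by auto
  have "0 \<le> cfl_cost C F c f xs ys"
    using opt_feas c_nonneg f_nonneg unfolding lp_feasible_def by (auto intro!: cfl_cost_nonneg)
  then have rounded: "cfl_cost ?Cr F c f xb yb \<le> M * cfl_cost C F c f xs ys"
    using le_max_mult_of_le_mult[OF xb_cost cfl_cost_hat_le[OF finC opt_feas \<open>1 < l\<close> c_nonneg f_nonneg]]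
      l_ge unfolding M_def L_eq by simp
  have "(\<Sum>j\<in>?Cp. p j) \<le> l * (\<Sum>j\<in>C. p j * zs j)"
    using penalty_Cp_le[of C l p zs] finC zs_nonneg \<open>1 < l\<close> by simp
  also have "\<dots> \<le> M * (\<Sum>j\<in>C. p j * zs j)"
    using \<open>l \<le> M\<close> zs_nonneg by (intro mult_right_mono sum_nonneg) auto
  finally have penalty: "(\<Sum>j\<in>?Cp. p j) \<le> M * (\<Sum>j\<in>C. p j * zs j)" .
  have "cflpp_cost C F c f p ?x yb (z_hat C zs l) \<le> M * cflpp_cost C F c f p xs ys zs"
    using rounded penalty unfolding cflpp_cost_extension[OF finC]
    by (simp add: cflpp_cost_def cfl_cost_def distrib_left)
  moreover have "(\<Sum>j\<in>C. ?x i j) = (\<Sum>j\<in>?Cr. xb i j)" for i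
    using sum.inter_restrict[OF finC, of "xb i" ?Cr] by (simp add: Int_absorb1 Cr_eq)
  ultimately show ?thesis
    using xb_int yb_int xb_le_yb xb_serves xb_cap unfolding M_def L_eq Let_def
    by (force simp: z_hat_def Cr_def mult.assoc)
qed

end
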